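(* Let $k\ge 2$ and let $a$ be a nonnegative integer with $a\le k-2$ and $a+k-1$ odd. Let $P(x_1,\dots,x_k)=\operatorname{sign}(a x_1+x_2+\cdots+x_k)$ and $\tau=\lfloor (k-a-1)/2\rfloor$. Then: (1) $\hat P_{\{1\}}=1-\frac{1}{2^{k-2}}\sum_{l=0}^{\tau}\binom{k-1}{l}$; (2) for every odd $t$ with $1\le t\le k-1$ and every set $I\subseteq\{2,\dots,k\}$ with $|I|=t$, \[\hat P_I=\frac{1}{2^{k-2}}\sum_{i=0}^{\tau}\sum_{j=0}^{\tau-i}(-1)^j\binom{k-t-1}{i}\binom{t}{j};\] (3) for every even $t$ with $2\le t\le k-1$ and every set $I=\{1\}\cup J$ with $J\subseteq\{2,\dots,k\}$, $|J|=t$, \[\hat P_I=-\frac{1}{2^{k-2}}\sum_{i=0}^{\tau}\sum_{j=0}^{\tau-i}(-1)^j\binom{k-t-1}{i}\binom{t}{j}.\]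
   Context: For $P:\{-1,1\}^k\to\{-1,1\}$ and $I\subseteq[k]$, the Fourier coefficient is $\hat P_I=\mathbb{E}_{x\in\{-1,1\}^k}[P(x)\prod_{i\in I}x_i]$ with $x$ uniform. Index $1$ is called the president and indices $2,\dots,k$ the citizens. *)

theory Defs
  imports Complex_Main "HOL-Library.FuncSet"
begin

text \<open>The Boolean cube \<open>{-1,1}^k\<close>, with coordinates indexed by \<open>{1..k}\<close>
  (index 1 is the president, indices 2..k the citizens).\<close>
definition cube :: "nat \<Rightarrow> (nat \<Rightarrow> int) set" where
  "cube k = PiE {1..k} (\<lambda>_. {-1, 1})"

definition fourier_coeff :: "nat \<Rightarrow> ((nat \<Rightarrow> int) \<Rightarrow> int) \<Rightarrow> nat set \<Rightarrow> real" where
  "fourier_coeff k P I =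
     (\<Sum>x\<in>cube k. real_of_int (P x * (\<Prod>i\<in>I. x i))) / 2 ^ k"

definition wmaj :: "nat \<Rightarrow> nat \<Rightarrow> (nat \<Rightarrow> int) \<Rightarrow> int" where
  "wmaj k a x = sgn (int a * x 1 + (\<Sum>i\<in>{2..k}. x i))"

end

theory Submission
  imports Defs
begin

text \<open>Since \<open>P\<close> is odd and \<open>|I|\<close> is odd in all three cases, \<open>P(x) \<chi>\<^sub>I(x)\<close> is even,
  so the Fourier sum is twice the sum over the half cube \<open>x\<^sub>1 = 1\<close>. There, with \<open>T\<close> the set of
  citizens voting \<open>-1\<close> and \<open>n = k - 1 = a + 2\<tau> + 1\<close>, we have \<open>P(x) = sgn(a + n - 2|T|)\<close>, which
  is \<open>1\<close> unless \<open>|T| > a + \<tau>\<close>. Writing \<open>J = I - {1}\<close>, the sum becomes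
  \<open>\<Sum>\<^sub>T (-1)^|T\<inter>J|\<close> minus twice the same sum restricted to \<open>|T| > a + \<tau>\<close>; complementing \<open>T\<close>
  turns the latter into \<open>(-1)^|J|\<close> times the sum over \<open>|T| \<le> \<tau>\<close>, which is evaluated by counting
  the sets \<open>T\<close> with \<open>|T - J| = i\<close> and \<open>|T \<inter> J| = j\<close>.\<close>

lemma sum_Pow_insert:
  fixes f :: "'a set \<Rightarrow> 'b::comm_monoid_add"
  assumes "finite A" "x \<notin> A"
  shows "(\<Sum>S\<in>Pow (insert x A). f S) = (\<Sum>S\<in>Pow A. f S + f (insert x S))"
proof -
  have "inj_on (insert x) (Pow A)"
    using assms(2) by (intro inj_onI) (metis Pow_iff insert_ident subset_iff)
  moreover have "(\<Sum>S\<in>Pow (insert x A). f S) = (\<Sum>S\<in>Pow A. f S) + (\<Sum>S\<in>insert x ` Pow A. f S)"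
    unfolding Pow_insert using assms by (intro sum.union_disjoint) auto
  ultimately show ?thesis by (simp add: sum.reindex sum.distrib)
qed

lemma sum_Pow_Diff:
  fixes f :: "'a set \<Rightarrow> 'b::comm_monoid_add"
  shows "(\<Sum>T\<in>Pow A. f T) = (\<Sum>T\<in>Pow A. f (A - T))"
proof -
  have "bij_betw (\<lambda>T. A - T) (Pow A) (Pow A)"
    by (rule bij_betw_byWitness[where f' = "\<lambda>T. A - T"]) auto
  then show ?thesis by (rule sum.reindex_bij_betw[symmetric])
qed

lemma sum_Pow_insert_Diff_invariant:
  fixes f :: "'a set \<Rightarrow> 'b::semiring_1"
  assumes "finite A" "x \<notin> A" and f: "\<And>S. S \<subseteq> insert x A \<Longrightarrow> f (insert x A - S) = f S"
  shows "(\<Sum>S\<in>Pow (insert x A). f S) = 2 * (\<Sum>S\<in>Pow A. f S)"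
proof -
  have "(\<Sum>S\<in>Pow A. f (insert x S)) = (\<Sum>S\<in>Pow A. f (insert x (A - S)))"
    by (rule sum_Pow_Diff)
  also have "\<dots> = (\<Sum>S\<in>Pow A. f S)"
  proof (rule sum.cong[OF refl])
    fix S assume "S \<in> Pow A"
    then have "insert x (A - S) = insert x A - S" "S \<subseteq> insert x A" using assms(2) by auto
    then show "f (insert x (A - S)) = f S" using f by simp
  qed
  finally show ?thesis by (simp add: sum_Pow_insert[OF assms(1,2)] sum.distrib mult_2)
qed

lemma minus_one_power_card_Diff_Int:
  assumes "finite I" "I \<subseteq> A"
  shows "(-1 :: 'a::comm_ring_1) ^ card ((A - S) \<inter> I) = (-1) ^ card I * (-1) ^ card (S \<inter> I)"
proof -
  have "(A - S) \<inter> I = I - S \<inter> I" using assms(2) by auto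
  moreover have "card (S \<inter> I) \<le> card I" using assms(1) by (intro card_mono) auto
  ultimately show ?thesis using assms(1) by (simp add: card_Diff_subset minus_one_power_iff)
qed

lemma sum_parity_Pow_eq_0:
  assumes "finite C" "J \<subseteq> C" "J \<noteq> {}"
  shows "(\<Sum>T\<in>Pow C. (-1 :: 'a::comm_ring_1) ^ card (T \<inter> J)) = 0"
proof -
  obtain j where j: "j \<in> J" using assms(3) by auto
  then have C: "C = insert j (C - {j})" using assms(2) by auto
  have "(-1 :: 'a) ^ card (T \<inter> J) + (-1) ^ card (insert j T \<inter> J) = 0" if "T \<subseteq> C - {j}" for T
  proof -
    have "insert j T \<inter> J = insert j (T \<inter> J)" "j \<notin> T \<inter> J" using j that by auto
    moreover have "finite (T \<inter> J)" using that assms(1) finite_subset by blast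
    ultimately show ?thesis by simp
  qed
  then show ?thesis using assms(1) by (subst C, subst sum_Pow_insert) auto
qed

lemma sum_parity_Pow_Diff:
  fixes g :: "nat \<Rightarrow> 'a::comm_ring_1"
  assumes "finite C" "J \<subseteq> C"
  shows "(\<Sum>T\<in>Pow C. (-1) ^ card (T \<inter> J) * g (card T))
       = (-1) ^ card J * (\<Sum>T\<in>Pow C. (-1) ^ card (T \<inter> J) * g (card C - card T))"
proof -
  have "(-1) ^ card ((C - T) \<inter> J) * g (card (C - T))
      = (-1) ^ card J * ((-1) ^ card (T \<inter> J) * g (card C - card T))" if "T \<subseteq> C" for T
  proof -
    have "finite J" "finite T" using that assms finite_subset by auto
    then show ?thesis
      using that assms by (simp add: minus_one_power_card_Diff_Int card_Diff_subset)
  qed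
  then show ?thesis
    by (subst sum_Pow_Diff) (simp add: sum_distrib_left)
qed

lemma card_Pow_split:
  assumes "finite C" "J \<subseteq> C"
  shows "card {T\<in>Pow C. card (T - J) = i \<and> card (T \<inter> J) = j}
       = (card C - card J choose i) * (card J choose j)"
proof -
  let ?X = "{B. B \<subseteq> C - J \<and> card B = i}" and ?Y = "{A. A \<subseteq> J \<and> card A = j}"
  have "{T\<in>Pow C. card (T - J) = i \<and> card (T \<inter> J) = j} = (\<lambda>(B, A). B \<union> A) ` (?X \<times> ?Y)"
  proof (intro equalityI subsetI)
    fix T assume "T \<in> {T\<in>Pow C. card (T - J) = i \<and> card (T \<inter> J) = j}"
    then have "(T - J, T \<inter> J) \<in> ?X \<times> ?Y" "T = (T - J) \<union> (T \<inter> J)" by auto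
    then show "T \<in> (\<lambda>(B, A). B \<union> A) ` (?X \<times> ?Y)" by (metis (no_types, lifting) case_prod_conv image_eqI)
  next
    fix T assume "T \<in> (\<lambda>(B, A). B \<union> A) ` (?X \<times> ?Y)"
    then obtain B A where "B \<in> ?X" "A \<in> ?Y" "T = B \<union> A" by auto
    moreover have "(B \<union> A) - J = B" "(B \<union> A) \<inter> J = A" using calculation by auto
    ultimately show "T \<in> {T\<in>Pow C. card (T - J) = i \<and> card (T \<inter> J) = j}" using assms by auto
  qed
  moreover have "inj_on (\<lambda>(B, A). B \<union> A) (?X \<times> ?Y)"
    by (rule inj_onI) auto
  moreover have "card ?X = card C - card J choose i" "card ?Y = card J choose j"
    using n_subsets[of "C - J" i] n_subsets[of J j] assms finite_subset[OF assms(2)]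
    by (auto simp: card_Diff_subset)
  ultimately show ?thesis by (simp add: card_image card_cartesian_product)
qed

lemma sum_parity_Pow_card_le:
  assumes "finite C" "J \<subseteq> C"
  shows "(\<Sum>T | T \<subseteq> C \<and> card T \<le> \<tau>. (-1 :: 'a::comm_ring_1) ^ card (T \<inter> J))
    = (\<Sum>i=0..\<tau>. \<Sum>j=0..\<tau> - i. (-1) ^ j * of_nat (card C - card J choose i) * of_nat (card J choose j))"
proof -
  let ?S = "{T. T \<subseteq> C \<and> card T \<le> \<tau>}" and ?P = "Sigma {0..\<tau>} (\<lambda>i. {0..\<tau> - i})"
  let ?split = "\<lambda>T. (card (T - J), card (T \<inter> J))"
  have card_T: "card T = card (T - J) + card (T \<inter> J)" if "T \<in> Pow C" for T
    using that assms(1) finite_subset card_Int_Diff[of T J] by (auto simp: add.commute)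
  have "(\<Sum>T | T \<subseteq> C \<and> card T \<le> \<tau>. (-1 :: 'a) ^ card (T \<inter> J))
      = (\<Sum>p\<in>?P. \<Sum>T\<in>{T. T \<in> ?S \<and> ?split T = p}. (-1) ^ card (T \<inter> J))"
    by (rule sum.group[symmetric]) (use assms(1) card_T in auto)
  also have "\<dots> = (\<Sum>(i, j)\<in>?P. (-1) ^ j * of_nat (card C - card J choose i) * of_nat (card J choose j))"
  proof (rule sum.cong[OF refl])
    fix p assume "p \<in> ?P"
    then obtain i j where p: "p = (i, j)" "i + j \<le> \<tau>" by auto
    then have "{T. T \<in> ?S \<and> ?split T = p} = {T\<in>Pow C. card (T - J) = i \<and> card (T \<inter> J) = j}"
      using card_T by auto
    then show "(\<Sum>T\<in>{T. T \<in> ?S \<and> ?split T = p}. (-1 :: 'a) ^ card (T \<inter> J))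
        = (case p of (i, j) \<Rightarrow> (-1) ^ j * of_nat (card C - card J choose i) * of_nat (card J choose j))"
      using card_Pow_split[OF assms, of i j] by (simp add: p)
  qed
  finally show ?thesis by (simp add: sum.Sigma)
qed

definition cube_point :: "nat \<Rightarrow> nat set \<Rightarrow> nat \<Rightarrow> int" where
  "cube_point k S = (\<lambda>i\<in>{1..k}. if i \<in> S then -1 else 1)"

lemma bij_betw_cube_point: "bij_betw (cube_point k) (Pow {1..k}) (cube k)"
proof (rule bij_betw_byWitness[where f' = "\<lambda>x. {i\<in>{1..k}. x i = -1}"])
  show "\<forall>x\<in>cube k. cube_point k {i\<in>{1..k}. x i = -1} = x"
    by (force simp: cube_point_def cube_def PiE_iff extensional_def)
qed (auto simp: cube_point_def cube_def)

lemma sum_cube_eq_sum_Pow: "(\<Sum>x\<in>cube k. F x) = (\<Sum>S\<in>Pow {1..k}. F (cube_point k S))"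
  using sum.reindex_bij_betw[OF bij_betw_cube_point, of F] by simp

lemma prod_cube_point:
  assumes "I \<subseteq> {1..k}"
  shows "(\<Prod>i\<in>I. cube_point k S i) = (-1) ^ card (S \<inter> I)"
proof -
  have "finite I" using assms finite_subset by blast
  have "(\<Prod>i\<in>I. cube_point k S i) = (\<Prod>i\<in>I. if i \<in> S then -1 else 1)"
    using assms by (intro prod.cong) (auto simp: cube_point_def)
  also have "\<dots> = (-1) ^ card (S \<inter> I)"
    using \<open>finite I\<close> by (simp add: prod.If_cases Int_commute Int_def)
  finally show ?thesis .
qed

lemma sum_cube_point:
  assumes "C \<subseteq> {1..k}"
  shows "(\<Sum>i\<in>C. cube_point k S i) = int (card C) - 2 * int (card (S \<inter> C))"
proof -
  have fin: "finite C" using assms finite_subset by blast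
  have "(\<Sum>i\<in>C. cube_point k S i) = (\<Sum>i\<in>C. if i \<in> S then -1 else 1)"
    using assms by (intro sum.cong) (auto simp: cube_point_def)
  also have "\<dots> = int (card (C - S)) - int (card (S \<inter> C))"
    using fin by (simp add: sum.If_cases Int_commute Diff_eq)
  also have "card (C - S) = card C - card (S \<inter> C)"
    using fin by (metis card_Diff_subset_Int finite_Int inf_commute)
  finally show ?thesis
    using fin card_mono[of C "S \<inter> C"] by auto
qed

lemma cube_point_Diff: "cube_point k ({1..k} - S) = (\<lambda>i\<in>{1..k}. - cube_point k S i)"
  by (auto simp: cube_point_def)

lemma wmaj_uminus:
  assumes "1 \<le> k"
  shows "wmaj k a (\<lambda>i\<in>{1..k}. - x i) = - wmaj k a x"
proof -
  have "wmaj k a (\<lambda>i\<in>{1..k}. - x i) = sgn (- (int a * x 1 + (\<Sum>i\<in>{2..k}. x i)))"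
    using assms by (simp add: wmaj_def sum_negf)
  also have "\<dots> = - wmaj k a x"
    by (simp only: Rings.sgn_minus wmaj_def)
  finally show ?thesis .
qed

lemma sum_cube_odd_parity:
  assumes "1 \<le> k" "I \<subseteq> {1..k}" "odd (card I)"
    and odd_P: "\<And>x. P (\<lambda>i\<in>{1..k}. - x i) = - P x"
  shows "(\<Sum>x\<in>cube k. P x * (\<Prod>i\<in>I. x i))
       = 2 * (\<Sum>T\<in>Pow {2..k}. P (cube_point k T) * (-1) ^ card (T \<inter> I))"
proof -
  define C where "C = {2..k}"
  have K: "{1..k} = insert 1 C" "1 \<notin> C" "finite C" using assms(1) by (auto simp: C_def)
  have "finite I" using assms(2) finite_subset by blast
  then have "P (cube_point k (insert 1 C - S)) * (-1) ^ card ((insert 1 C - S) \<inter> I)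
      = P (cube_point k S) * (-1) ^ card (S \<inter> I)" for S
    using assms(2,3) unfolding K(1)[symmetric]
    by (simp only: cube_point_Diff odd_P minus_one_power_card_Diff_Int) simp
  then show ?thesis
    unfolding sum_cube_eq_sum_Pow prod_cube_point[OF assms(2)] K(1) C_def[symmetric]
    by (intro sum_Pow_insert_Diff_invariant K(2,3))
qed

lemma wmaj_cube_point_citizens:
  assumes "k = a + 2 * \<tau> + 2" "T \<subseteq> {2..k}"
  shows "wmaj k a (cube_point k T) = (if card T \<le> a + \<tau> then 1 else -1)"
proof -
  have "cube_point k T 1 = 1" using assms by (auto simp: cube_point_def)
  moreover have "(\<Sum>i\<in>{2..k}. cube_point k T i) = int (k - 1) - 2 * int (card T)"
    using sum_cube_point[of "{2..k}" k T] assms(2) by (simp add: Int_absorb2)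
  ultimately have "wmaj k a (cube_point k T) = sgn (int a + (int (k - 1) - 2 * int (card T)))"
    by (simp add: wmaj_def)
  also have "int a + (int (k - 1) - 2 * int (card T)) = 2 * (int (a + \<tau>) - int (card T)) + 1"
    using assms(1) by simp
  finally show ?thesis by (simp add: sgn_if)
qed

lemma sum_cube_wmaj_parity:
  assumes "k = a + 2 * \<tau> + 2" "I \<subseteq> {1..k}" "odd (card I)"
  defines "J \<equiv> I - {1}"
  shows "(\<Sum>x\<in>cube k. wmaj k a x * (\<Prod>i\<in>I. x i))
       = 2 * (\<Sum>T\<in>Pow {2..k}. (-1) ^ card (T \<inter> J))
         - 4 * (-1) ^ card J * (\<Sum>T | T \<subseteq> {2..k} \<and> card T \<le> \<tau>. (-1) ^ card (T \<inter> J))"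
proof -
  let ?\<chi> = "\<lambda>T. (-1 :: int) ^ card (T \<inter> J)"
  have J: "J \<subseteq> {2..k}" using assms(2) by (auto simp: J_def)
  have "wmaj k a (cube_point k T) * (-1) ^ card (T \<inter> I) = ?\<chi> T * (1 - 2 * of_bool (a + \<tau> < card T))"
    if "T \<subseteq> {2..k}" for T
  proof -
    have "T \<inter> I = T \<inter> J" using that by (auto simp: J_def)
    then show ?thesis using wmaj_cube_point_citizens[OF assms(1) that] by auto
  qed
  then have "(\<Sum>x\<in>cube k. wmaj k a x * (\<Prod>i\<in>I. x i))
      = 2 * (\<Sum>T\<in>Pow {2..k}. ?\<chi> T * (1 - 2 * of_bool (a + \<tau> < card T)))"
    using assms(1-3) wmaj_uminus by (subst sum_cube_odd_parity) auto
  also have "\<dots> = 2 * (\<Sum>T\<in>Pow {2..k}. ?\<chi> T) - 4 * (\<Sum>T\<in>Pow {2..k}. ?\<chi> T * of_bool (a + \<tau> < card T))"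
    by (simp add: algebra_simps sum_subtractf sum_distrib_left del: sum_mult_of_bool_eq)
  also have "(\<Sum>T\<in>Pow {2..k}. ?\<chi> T * of_bool (a + \<tau> < card T))
      = (-1) ^ card J * (\<Sum>T\<in>Pow {2..k}. ?\<chi> T * of_bool (a + \<tau> < card {2..k} - card T))"
    by (rule sum_parity_Pow_Diff[OF finite_atLeastAtMost J])
  also have "(\<Sum>T\<in>Pow {2..k}. ?\<chi> T * of_bool (a + \<tau> < card {2..k} - card T))
      = (\<Sum>T | T \<subseteq> {2..k} \<and> card T \<le> \<tau>. ?\<chi> T)"
    using assms(1) by (auto intro!: sum.cong)
  finally show ?thesis by simp
qed

lemma fourier_coeff_wmaj:
  assumes "k = a + 2 * \<tau> + 2" "I \<subseteq> {1..k}" "odd (card I)"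
  defines "J \<equiv> I - {1}"
  shows "fourier_coeff k (wmaj k a) I
       = ((if J = {} then 2 ^ (k - 1) else 0)
          - 2 * (-1) ^ card J * (\<Sum>i=0..\<tau>. \<Sum>j=0..\<tau> - i.
               (-1) ^ j * real (k - card J - 1 choose i) * real (card J choose j))) / 2 ^ (k - 1)"
proof -
  let ?\<chi> = "\<lambda>T. (-1 :: real) ^ card (T \<inter> J)"
  have J: "J \<subseteq> {2..k}" using assms(2) by (auto simp: J_def)
  have "fourier_coeff k (wmaj k a) I = real_of_int (\<Sum>x\<in>cube k. wmaj k a x * (\<Prod>i\<in>I. x i)) / 2 ^ k"
    by (simp only: fourier_coeff_def of_int_sum)
  also have "real_of_int (\<Sum>x\<in>cube k. wmaj k a x * (\<Prod>i\<in>I. x i))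
      = 2 * (\<Sum>T\<in>Pow {2..k}. ?\<chi> T)
        - 4 * (-1) ^ card J * (\<Sum>T | T \<subseteq> {2..k} \<and> card T \<le> \<tau>. ?\<chi> T)"
    unfolding sum_cube_wmaj_parity[OF assms(1-3), folded J_def] by (simp add: of_int_sum)
  also have "(\<Sum>T\<in>Pow {2..k}. ?\<chi> T) = (if J = {} then 2 ^ (k - 1) else 0)"
    using sum_parity_Pow_eq_0[OF finite_atLeastAtMost J, where 'a = real] by (simp add: card_Pow)
  also have "(\<Sum>T | T \<subseteq> {2..k} \<and> card T \<le> \<tau>. ?\<chi> T)
      = (\<Sum>i=0..\<tau>. \<Sum>j=0..\<tau> - i. (-1) ^ j * real (k - card J - 1 choose i) * real (card J choose j))"
    using sum_parity_Pow_card_le[OF finite_atLeastAtMost J] by simp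
  also have "(2 :: real) ^ k = 2 * 2 ^ (k - 1)" using assms(1) by (simp flip: power_Suc)
  finally show ?thesis by (simp add: field_simps)
qed

theorem lemma2p1:
  fixes k a :: nat
  assumes "k \<ge> 2" and "a \<le> k - 2" and "odd (a + k - 1)"
  defines "\<tau> \<equiv> (k - a - 1) div 2"
  shows "(fourier_coeff k (wmaj k a) {1} =
           1 - (\<Sum>l=0..\<tau>. real (k - 1 choose l)) / 2 ^ (k - 2)) \<and>
         (\<forall>t I. odd t \<and> 1 \<le> t \<and> t \<le> k - 1 \<and> I \<subseteq> {2..k} \<and> card I = t \<longrightarrow>
           fourier_coeff k (wmaj k a) I =
             (\<Sum>i=0..\<tau>. \<Sum>j=0..\<tau> - i.
                (-1) ^ j * real (k - t - 1 choose i) * real (t choose j)) / 2 ^ (k - 2)) \<and>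
         (\<forall>t J. even t \<and> 2 \<le> t \<and> t \<le> k - 1 \<and> J \<subseteq> {2..k} \<and> card J = t \<longrightarrow>
           fourier_coeff k (wmaj k a) ({1} \<union> J) =
             - (\<Sum>i=0..\<tau>. \<Sum>j=0..\<tau> - i.
                (-1) ^ j * real (k - t - 1 choose i) * real (t choose j)) / 2 ^ (k - 2))"
proof -
  have k: "k = a + 2 * \<tau> + 2"
    using assms(1-3) unfolding \<tau>_def by (auto elim!: oddE)
  have pow: "(2 :: real) ^ (k - 1) = 2 * 2 ^ (k - 2)"
    using assms(1) by (simp flip: power_Suc)
  have choose_0: "(\<Sum>j=0..m. (-1) ^ j * x * real (0 choose j)) = x" for m and x :: real
    by (induction m) auto
  have "fourier_coeff k (wmaj k a) {1}
      = (2 ^ (k - 1) - 2 * (\<Sum>l=0..\<tau>. real (k - 1 choose l))) / 2 ^ (k - 1)"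
    using fourier_coeff_wmaj[OF k, of "{1}"] assms(1) by (simp add: choose_0)
  moreover have "fourier_coeff k (wmaj k a) I = (\<Sum>i=0..\<tau>. \<Sum>j=0..\<tau> - i.
      (-1) ^ j * real (k - t - 1 choose i) * real (t choose j)) / 2 ^ (k - 2)"
    if "odd t" "I \<subseteq> {2..k}" "card I = t" for t I
  proof -
    have "I - {1} = I" "I \<noteq> {}" "I \<subseteq> {1..k}" using that by auto
    then show ?thesis
      using fourier_coeff_wmaj[OF k, of I] that pow by (simp add: field_simps)
  qed
  moreover have "fourier_coeff k (wmaj k a) ({1} \<union> J) = - (\<Sum>i=0..\<tau>. \<Sum>j=0..\<tau> - i.
      (-1) ^ j * real (k - t - 1 choose i) * real (t choose j)) / 2 ^ (k - 2)"
    if "even t" "2 \<le> t" "J \<subseteq> {2..k}" "card J = t" for t J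
  proof -
    have "1 \<notin> J" using that(3) by auto
    then have "({1} \<union> J) - {1} = J" "J \<noteq> {}" "{1} \<union> J \<subseteq> {1..k}" "card ({1} \<union> J) = t + 1"
      using that assms(1) finite_subset[OF that(3)] by auto
    then show ?thesis
      using fourier_coeff_wmaj[OF k, of "{1} \<union> J"] that pow by (simp add: field_simps)
  qed
  ultimately show ?thesis
    using pow by (auto simp: field_simps)
qed

end
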